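(* Let $n\ge 2$. For $\alpha\in\mathbb{Z}_2^{n-1}$ and a bit $a$, write $\alpha a=(\alpha_0,\dots,\alpha_{n-2},a)\in\mathbb{Z}_2^n$; for $\alpha\in\mathbb{Z}_2^{n-2}$ and bits $a,b$, write $\alpha ab=(\alpha_0,\dots,\alpha_{n-3},a,b)\in\mathbb{Z}_2^n$. Then: (1) for every $\alpha\in\mathbb{Z}_2^{n-1}$, $\max_{\beta,\gamma\in\mathbb{Z}_2^n}\mathrm{adp}^{\mathrm{XR}}_{n-1}(\alpha0,\beta\to\gamma)=\mathrm{adp}^{\mathrm{XR}}_{n-1}(\alpha0,\alpha0\to0)$; (2) for every $\alpha\in\mathbb{Z}_2^{n-2}$, $\max_{\beta,\gamma\in\mathbb{Z}_2^n}\mathrm{adp}^{\mathrm{XR}}_{n-1}(\alpha01,\beta\to\gamma)=\mathrm{adp}^{\mathrm{XR}}_{n-1}(\alpha01,\alpha00\to2^{n-1})$; (3) for every $\alpha\in\mathbb{Z}_2^{n-2}$, $\max_{\beta,\gamma\in\mathbb{Z}_2^n}\mathrm{adp}^{\mathrm{XR}}_{n-1}(\alpha11,\beta\to\gamma)=\mathrm{adp}^{\mathrm{XR}}_{n-1}(\alpha11,\overline{\alpha}00\to2^{n-1})$.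
   Context: For $x\in\mathbb{Z}_2^n$ write $x=(x_0,\dots,x_{n-1})$ and identify $x$ with the integer $\sum_{i=0}^{n-1}x_i2^{n-1-i}$, so $x_0$ is the most significant bit; $x+y$, $x-y$, $-x$ are computed modulo $2^n$; $2^{n-1}$ is the vector $(1,0,\dots,0)$. $\oplus$ is bitwise XOR, $\overline{x}=(x_0\oplus1,\dots,x_{m-1}\oplus1)$ is the bitwise complement, and $x\lll r=(x_r,\dots,x_{n-1},x_0,\dots,x_{r-1})$. For $f:(\mathbb{Z}_2^n)^k\to\mathbb{Z}_2^n$, $\mathrm{adp}^f(\alpha_1,\dots,\alpha_k\to\alpha_{k+1})=2^{-kn}\#\{(x_1,\dots,x_k): f(x_1+\alpha_1,\dots,x_k+\alpha_k)=f(x_1,\dots,x_k)+\alpha_{k+1}\}$. For $1\le r\le n-1$, $\mathrm{adp}^{\mathrm{XR}}_r$ denotes $\mathrm{adp}^f$ for $f(x,y)=(x\oplus y)\lll r$. *)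

theory Defs
  imports Complex_Main
begin

text \<open>Elements of Z_2^n are represented by naturals in {0..<2^n}; bit x_i (MSB-first)
  is bit (n-1-i) of the integer. Arithmetic is modulo 2^n.\<close>

definition words :: "nat \<Rightarrow> nat set" where
  "words n = {0..<2^n}"

definition addm :: "nat \<Rightarrow> nat \<Rightarrow> nat \<Rightarrow> nat" where
  "addm n x y = (x + y) mod 2^n"

text \<open>Left rotation x <<< r = (x_r,...,x_{n-1},x_0,...,x_{r-1}).\<close>
definition rotl :: "nat \<Rightarrow> nat \<Rightarrow> nat \<Rightarrow> nat" where
  "rotl n r x = (x * 2^r) mod 2^n + x div 2^(n - r)"

definition XR :: "nat \<Rightarrow> nat \<Rightarrow> nat \<Rightarrow> nat \<Rightarrow> nat" where
  "XR n r x y = rotl n r (xor x y)"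

definition adp2 :: "nat \<Rightarrow> (nat \<Rightarrow> nat \<Rightarrow> nat) \<Rightarrow> nat \<Rightarrow> nat \<Rightarrow> nat \<Rightarrow> real" where
  "adp2 n f a1 a2 a3 = real (card {(x, y). x \<in> words n \<and> y \<in> words n \<and>
      f (addm n x a1) (addm n y a2) = addm n (f x y) a3}) / 2 ^ (2 * n)"

definition adpXR :: "nat \<Rightarrow> nat \<Rightarrow> nat \<Rightarrow> nat \<Rightarrow> nat \<Rightarrow> real" where
  "adpXR n r a b c = adp2 n (XR n r) a b c"

end

theory Submission
  imports Defs
begin

(*
  Rotating by n - 1 moves the lowest bit of x XOR y to the top. Splitting x and y into their
  lowest bits and their high halves, the number of solutions of the XR condition becomes a sum
  of four counts N(p, q, d) of pairs (x, y) of (n-1)-bit words with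
  ((x + p) XOR (y + q)) - (x XOR y) = d as integers, where p and q are the input differences
  together with the carries out of the lowest bit.

  Processing one bit at a time shows that, for each fixed x, the number of such y is at most the
  number for q = p, d = 0, and that N(p, q, d) = 0 unless d and p + q have equal parity. The
  diagonal T(p) = N(p, p, 0) satisfies T(2h) = 4 T(h) and T(2h+1) = T(h) + T(h+1); hence
  neighbouring values are within a factor 3 and odd arguments are local minima of T. These bounds
  give the maximum in each of the three cases, and complementing y, which maps N(p, q, 0) to
  N(p, 2^(n-1) - q, 0), evaluates case (3) at the claimed optimum.
*)

section \<open>Bit arithmetic\<close>

lemma sum_lessThan_2: "(\<Sum>i<2. f i) = f 0 + f (1::nat)"
  by (simp add: numeral_2_eq_2)

lemma sum_lessThan_double: "(\<Sum>x<2 * K. f x) = (\<Sum>x0<2. \<Sum>x<K. f (2 * x + x0::nat))"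
proof (induction K)
  case (Suc K)
  have "2 * Suc K = Suc (Suc (2 * K))" by simp
  then show ?case using Suc by (simp add: sum_lessThan_2 add_ac)
qed simp

lemma sum_lessThan_pow2_Suc: "(\<Sum>x<2 ^ Suc k. f x) = (\<Sum>x0<2. \<Sum>x<2 ^ k. f (2 * x + x0::nat))"
  using sum_lessThan_double[of f "2 ^ k"] by simp

lemma xor_double_add:
  fixes a b a0 b0 :: nat
  assumes "a0 < 2" "b0 < 2"
  shows "xor (a0 + 2 * a) (b0 + 2 * b) = (a0 + b0) mod 2 + 2 * xor a b"
  using assms by (subst xor_rec) (auto simp: less_2_cases_iff)

lemma pow2_Suc_minus_1: "(2::nat) ^ Suc k - 1 = 1 + 2 * (2 ^ k - 1)"
proof -
  have "(2::nat) ^ k \<ge> 1" by simp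
  then show ?thesis by (simp only: power_Suc)
qed

lemma xor_pow2_minus_1: "(c::nat) < 2 ^ k \<Longrightarrow> xor (2 ^ k - 1) c = 2 ^ k - 1 - c"
proof (induction k arbitrary: c)
  case (Suc k)
  have "c div 2 < 2 ^ k" using Suc.prems by (simp add: less_mult_imp_div_less)
  then show ?case
    using Suc.IH[of "c div 2"] Suc.prems unfolding pow2_Suc_minus_1
    by (subst xor_rec) (auto elim!: oddE evenE)
qed simp

lemma xor_less_pow2: "(a::nat) < 2 ^ k \<Longrightarrow> b < 2 ^ k \<Longrightarrow> xor a b < 2 ^ k"
  by (metis take_bit_nat_eq_self_iff take_bit_xor)

lemma xor_pow2_minus_1_right:
  fixes a b :: nat
  assumes "a < 2 ^ k" "b < 2 ^ k"
  shows "xor a (2 ^ k - 1 - b) = 2 ^ k - 1 - xor a b"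
proof -
  have "xor a (2 ^ k - 1 - b) = xor (2 ^ k - 1) (xor a b)"
    unfolding xor_pow2_minus_1[OF assms(2), symmetric] by (rule xor.left_commute)
  also have "\<dots> = 2 ^ k - 1 - xor a b"
    using assms by (intro xor_pow2_minus_1 xor_less_pow2)
  finally show ?thesis .
qed

lemma mod_reflect:
  fixes M y q :: nat
  assumes "y < M" "q \<le> M"
  shows "(M - Suc y + (M - q)) mod M = M - 1 - (y + q) mod M"
proof (cases "y + q < M")
  case True
  have eq: "M - Suc y + (M - q) = (M - 1 - (y + q)) + M" using True assms by linarith
  show ?thesis unfolding eq mod_add_self2 using True by simp
next
  case False
  have eq: "M - Suc y + (M - q) = M - 1 - (y + q - M)" using False assms by linarith
  have "(y + q) mod M = y + q - M"
    using False assms by (simp add: le_mod_geq)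
  then show ?thesis unfolding eq using assms by simp
qed

lemma add_mod_pow2_Suc:
  "((x::nat) + p) mod 2 ^ Suc k = (x + p) mod 2 + 2 * ((x div 2 + (x mod 2 + p) div 2) mod 2 ^ k)"
proof -
  have "(x + p) div 2 = x div 2 + (x mod 2 + p) div 2" by presburger
  then show ?thesis by (simp add: mod_mult2_eq add.commute)
qed

lemma xor_halves: "xor (x::nat) y = (x + y) mod 2 + 2 * xor (x div 2) (y div 2)"
  by (subst xor_rec) (auto simp: mod2_eq_if)

lemma xor_add_mod_pow2_Suc:
  fixes x y p q :: nat
  shows "xor ((x + p) mod 2 ^ Suc k) ((y + q) mod 2 ^ Suc k) = (x + p + y + q) mod 2 +
    2 * xor ((x div 2 + (x mod 2 + p) div 2) mod 2 ^ k) ((y div 2 + (y mod 2 + q) div 2) mod 2 ^ k)"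
  unfolding add_mod_pow2_Suc[of x] add_mod_pow2_Suc[of y]
  by (subst xor_double_add) (simp_all add: mod_add_eq add.assoc)

section \<open>Additive differences of XOR\<close>

definition xor_diff :: "nat \<Rightarrow> nat \<Rightarrow> nat \<Rightarrow> nat \<Rightarrow> nat \<Rightarrow> int" where
  "xor_diff k p q x y = int (xor ((x + p) mod 2 ^ k) ((y + q) mod 2 ^ k)) - int (xor x y)"

definition xor_diff_row :: "nat \<Rightarrow> nat \<Rightarrow> nat \<Rightarrow> int \<Rightarrow> nat \<Rightarrow> nat" where
  "xor_diff_row k p q d x = (\<Sum>y<2 ^ k. of_bool (xor_diff k p q x y = d))"

definition xor_diff_count :: "nat \<Rightarrow> nat \<Rightarrow> nat \<Rightarrow> int \<Rightarrow> nat" where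
  "xor_diff_count k p q d = (\<Sum>x<2 ^ k. xor_diff_row k p q d x)"

definition low_xor_diff :: "nat \<Rightarrow> nat \<Rightarrow> nat \<Rightarrow> nat \<Rightarrow> int" where
  "low_xor_diff p q x y = int ((x + p + y + q) mod 2) - int ((x + y) mod 2)"

lemma xor_diff_Suc:
  assumes "y0 < 2"
  shows "xor_diff (Suc k) p q x (2 * y + y0) =
    low_xor_diff p q x y0 + 2 * xor_diff k ((x mod 2 + p) div 2) ((y0 + q) div 2) (x div 2) y"
proof -
  have y: "(2 * y + y0) mod 2 = y0" "(2 * y + y0) div 2 = y" using assms by auto
  have "(x + p + (2 * y + y0) + q) mod 2 = (x + p + y0 + q) mod 2" by presburger
  moreover have "(x + (2 * y + y0)) mod 2 = (x + y0) mod 2" by presburger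
  ultimately show ?thesis
    unfolding xor_diff_def low_xor_diff_def xor_add_mod_pow2_Suc xor_halves[of x] y by simp
qed

lemma of_bool_double_add_eq:
  "(of_bool (e + 2 * z = d) :: nat) = (if even (d - e) then of_bool (z = (d - e) div 2) else 0)"
  for e z d :: int
proof (cases "even (d - e)")
  case True
  then show ?thesis by auto
next
  case False
  then have "e + 2 * z \<noteq> d" by auto
  with False show ?thesis by simp
qed

definition xor_diff_row_branch :: "nat \<Rightarrow> nat \<Rightarrow> nat \<Rightarrow> int \<Rightarrow> nat \<Rightarrow> nat \<Rightarrow> nat" where
  "xor_diff_row_branch k p q d x y0 = (let e = low_xor_diff p q x y0 in
     if even (d - e) then xor_diff_row k ((x mod 2 + p) div 2) ((y0 + q) div 2) ((d - e) div 2) (x div 2)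
     else 0)"

lemma xor_diff_row_Suc:
  "xor_diff_row (Suc k) p q d x = xor_diff_row_branch k p q d x 0 + xor_diff_row_branch k p q d x 1"
proof -
  have branch: "(\<Sum>y<2 ^ k. of_bool (xor_diff (Suc k) p q x (2 * y + y0) = d)) =
      xor_diff_row_branch k p q d x y0"
    if "y0 < 2" for y0
    using that unfolding xor_diff_row_branch_def Let_def
    by (cases "even (d - low_xor_diff p q x y0)")
      (simp_all add: xor_diff_Suc of_bool_double_add_eq xor_diff_row_def)
  show ?thesis
    using branch[of 0] branch[of 1] unfolding xor_diff_row_def[of "Suc k"] sum_lessThan_pow2_Suc sum_lessThan_2
    by simp
qed

lemma even_xor_diff:
  assumes "k \<ge> 1"
  shows "even (xor_diff k p q x y - int p - int q)"
proof -
  have "even (int (xor ((x + p) mod 2 ^ k) ((y + q) mod 2 ^ k)) + int (xor x y) + int p + int q)"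
    using assms by (simp add: even_xor_iff even_add flip: take_bit_eq_mod) argo
  then show ?thesis unfolding xor_diff_def by (simp add: even_add even_diff)
qed

lemma xor_diff_row_eq_0:
  assumes "k \<ge> 1" "odd (d - int p - int q)"
  shows "xor_diff_row k p q d x = 0"
proof -
  have "xor_diff k p q x y \<noteq> d" for y
    using even_xor_diff[OF assms(1), of p q x y] assms(2) by auto
  then show ?thesis unfolding xor_diff_row_def by simp
qed

lemma xor_diff_row_branch_odd:
  assumes "k \<ge> 1" "odd p"
  shows "xor_diff_row_branch k p q d x 0 = 0 \<or> xor_diff_row_branch k p q d x 1 = 0"
proof (rule ccontr)
  define P where "P = (x mod 2 + p) div 2"
  have parity: "even (d - low_xor_diff p q x y0) \<and>
      even ((d - low_xor_diff p q x y0) div 2 - int P - int ((y0 + q) div 2))"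
    if "xor_diff_row_branch k p q d x y0 \<noteq> 0" for y0
  proof -
    have "even (d - low_xor_diff p q x y0)"
      using that unfolding xor_diff_row_branch_def Let_def by (auto simp only: split: if_splits)
    moreover from this
    have "xor_diff_row k P ((y0 + q) div 2) ((d - low_xor_diff p q x y0) div 2) (x div 2) \<noteq> 0"
      using that unfolding xor_diff_row_branch_def Let_def P_def by simp
    ultimately show ?thesis using xor_diff_row_eq_0[OF assms(1)] by metis
  qed
  have e: "low_xor_diff p q x 0 = (if odd q then 0 else if even x then 1 else -1)"
    "low_xor_diff p q x 1 = (if odd q then 0 else if even x then -1 else 1)"
    using assms(2) unfolding low_xor_diff_def by (auto elim!: oddE evenE simp: mod2_eq_if)
  have "(1 + q) div 2 = q div 2 + q mod 2" by presburger
  \<comment> \<open>the two choices of the lowest bit of y lead to target differences of opposite parity\<close>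
  assume "\<not> ?thesis"
  with parity[of 0] parity[of 1] show False unfolding e \<open>(1 + q) div 2 = _\<close>
    by (cases "even q"; cases "even x";
        simp only: if_True if_False not_True_eq_False not_False_eq_True add_0; presburger)
qed

lemma xor_diff_row_le: "xor_diff_row k p q d x \<le> 2 ^ k"
proof -
  have "xor_diff_row k p q d x \<le> (\<Sum>y<(2::nat) ^ k. 1)"
    unfolding xor_diff_row_def by (intro sum_mono) simp
  then show ?thesis by simp
qed

lemma xor_diff_row_0: "xor_diff_row 0 p q 0 0 = 1"
  by (simp add: xor_diff_row_def xor_diff_def)

lemma xor_diff_row_Suc_diag:
  "xor_diff_row (Suc k) p p 0 x =
     xor_diff_row k ((x mod 2 + p) div 2) (p div 2) 0 (x div 2)
   + xor_diff_row k ((x mod 2 + p) div 2) (p div 2 + p mod 2) 0 (x div 2)"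
proof -
  have "low_xor_diff p p x y0 = 0" for y0
    unfolding low_xor_diff_def by presburger
  moreover have "(1 + p) div 2 = p div 2 + p mod 2" by presburger
  ultimately show ?thesis unfolding xor_diff_row_Suc xor_diff_row_branch_def by simp
qed

lemma xor_diff_row_le_diag:
  assumes "k \<ge> 1" "x < 2 ^ k"
  shows "xor_diff_row k p q d x \<le> xor_diff_row k p p 0 x"
  using assms
proof (induction k arbitrary: x p q d rule: nat_induct_at_least)
  case base
  then have "xor_diff_row 1 p p 0 x = 2"
    using xor_diff_row_Suc_diag[of 0 p x] by (simp add: xor_diff_row_0)
  then show ?case using xor_diff_row_le[of 1] by simp
next
  case (Suc k)
  define x' where "x' = x div 2"
  define P where "P = (x mod 2 + p) div 2"
  have x': "x' < 2 ^ k" using Suc.prems unfolding x'_def by (simp add: less_mult_imp_div_less)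
  have diag: "xor_diff_row (Suc k) p p 0 x =
      xor_diff_row k P (p div 2) 0 x' + xor_diff_row k P (p div 2 + p mod 2) 0 x'"
    unfolding xor_diff_row_Suc_diag P_def x'_def ..
  have branch_le: "xor_diff_row_branch k p q d x y0 \<le> xor_diff_row k P P 0 x'" for y0
    unfolding xor_diff_row_branch_def Let_def P_def[symmetric] x'_def[symmetric] using Suc.IH[OF x'] by simp
  show ?case
  proof (cases "even p")
    case True
    then have "P = p div 2" "p mod 2 = 0" unfolding P_def by presburger+
    then show ?thesis unfolding diag unfolding xor_diff_row_Suc using branch_le[of 0] branch_le[of 1] by simp
  next
    case False
    have "P = p div 2 \<or> P = p div 2 + p mod 2"
      using False unfolding P_def by (cases "even x") (auto elim!: oddE evenE)
    then have "xor_diff_row k P P 0 x' \<le> xor_diff_row (Suc k) p p 0 x"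
      unfolding diag by auto
    then show ?thesis
      using xor_diff_row_branch_odd[OF \<open>k \<ge> 1\<close> False, of q d x] branch_le[of 0] branch_le[of 1]
      unfolding xor_diff_row_Suc by auto
  qed
qed

lemma xor_diff_reflect:
  assumes "x < 2 ^ k" "y < 2 ^ k" "q \<le> 2 ^ k"
  shows "xor_diff k p (2 ^ k - q) x (2 ^ k - Suc y) = - xor_diff k p q x y"
proof -
  define A where "A = (x + p) mod 2 ^ k"
  define B where "B = (y + q) mod 2 ^ k"
  have AB: "A < 2 ^ k" "B < 2 ^ k" unfolding A_def B_def by simp_all
  have reflect: "(2 ^ k - Suc y + (2 ^ k - q)) mod 2 ^ k = 2 ^ k - 1 - B"
    unfolding B_def using assms by (intro mod_reflect) simp_all
  have "xor_diff k p (2 ^ k - q) x (2 ^ k - Suc y) =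
      int (xor A (2 ^ k - 1 - B)) - int (xor x (2 ^ k - 1 - y))"
    unfolding xor_diff_def reflect A_def by simp
  also have "\<dots> = int (2 ^ k - 1 - xor A B) - int (2 ^ k - 1 - xor x y)"
    using AB assms by (simp only: xor_pow2_minus_1_right)
  also have "\<dots> = - xor_diff k p q x y"
  proof -
    have "xor A B \<le> 2 ^ k - 1" "xor x y \<le> 2 ^ k - 1"
      using xor_less_pow2[OF AB] xor_less_pow2[OF assms(1,2)] by linarith+
    then show ?thesis
      unfolding xor_diff_def A_def[symmetric] B_def[symmetric] by (simp add: of_nat_diff)
  qed
  finally show ?thesis .
qed

lemma xor_diff_row_reflect:
  assumes "x < 2 ^ k" "q \<le> 2 ^ k"
  shows "xor_diff_row k p (2 ^ k - q) (- d) x = xor_diff_row k p q d x"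
proof -
  have "xor_diff_row k p (2 ^ k - q) (- d) x =
      (\<Sum>y<2 ^ k. of_bool (xor_diff k p (2 ^ k - q) x (2 ^ k - Suc y) = - d))"
    unfolding xor_diff_row_def by (rule sum.nat_diff_reindex[symmetric])
  also have "\<dots> = xor_diff_row k p q d x"
    unfolding xor_diff_row_def using assms by (intro sum.cong) (simp_all add: xor_diff_reflect)
  finally show ?thesis .
qed

abbreviation xor_diff_diag :: "nat \<Rightarrow> nat \<Rightarrow> nat" where
  "xor_diff_diag k p \<equiv> xor_diff_count k p p 0"

lemma xor_diff_count_le_diag:
  "k \<ge> 1 \<Longrightarrow> xor_diff_count k p q d \<le> xor_diff_diag k p"
  unfolding xor_diff_count_def by (intro sum_mono xor_diff_row_le_diag) simp_all

lemma xor_diff_count_eq_0: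
  "k \<ge> 1 \<Longrightarrow> odd (d - int p - int q) \<Longrightarrow> xor_diff_count k p q d = 0"
  unfolding xor_diff_count_def by (simp add: xor_diff_row_eq_0)

lemma xor_diff_count_reflect:
  "q \<le> 2 ^ k \<Longrightarrow> xor_diff_count k p (2 ^ k - q) (- d) = xor_diff_count k p q d"
  unfolding xor_diff_count_def by (intro sum.cong) (simp_all add: xor_diff_row_reflect)

lemma xor_diff_diag_Suc:
  "xor_diff_diag (Suc k) p = (\<Sum>x0<2.
     xor_diff_count k ((x0 + p) div 2) (p div 2) 0 + xor_diff_count k ((x0 + p) div 2) (p div 2 + p mod 2) 0)"
proof -
  have "xor_diff_row (Suc k) p p 0 (2 * x + x0) =
      xor_diff_row k ((x0 + p) div 2) (p div 2) 0 x + xor_diff_row k ((x0 + p) div 2) (p div 2 + p mod 2) 0 x"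
    if "x0 < 2" for x x0
    using that by (simp add: xor_diff_row_Suc_diag)
  then show ?thesis
    unfolding xor_diff_count_def sum_lessThan_pow2_Suc by (simp add: sum.distrib)
qed

lemma xor_diff_diag_Suc_even: "xor_diff_diag (Suc k) (2 * h) = 4 * xor_diff_diag k h"
  unfolding xor_diff_diag_Suc sum_lessThan_2 by simp

lemma xor_diff_diag_Suc_odd:
  "k \<ge> 1 \<Longrightarrow> xor_diff_diag (Suc k) (2 * h + 1) = xor_diff_diag k h + xor_diff_diag k (h + 1)"
  unfolding xor_diff_diag_Suc sum_lessThan_2 by (simp add: xor_diff_count_eq_0)

lemma xor_diff_diag_1: "xor_diff_diag 1 p = 4"
  using xor_diff_diag_Suc[of 0 p] by (simp add: sum_lessThan_2 xor_diff_count_def xor_diff_row_0)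

lemma xor_diff_diag_ratio:
  assumes "k \<ge> 1"
  shows "xor_diff_diag k (h + 1) \<le> 3 * xor_diff_diag k h \<and>
    xor_diff_diag k h \<le> 3 * xor_diff_diag k (h + 1)"
  using assms
proof (induction k arbitrary: h rule: nat_induct_at_least)
  case base
  then show ?case by (simp add: xor_diff_diag_1[unfolded One_nat_def])
next
  case (Suc k)
  note even = xor_diff_diag_Suc_even[of k] and odd = xor_diff_diag_Suc_odd[OF Suc.hyps]
  obtain j where j: "h = 2 * j \<or> h = 2 * j + 1" by (metis oddE evenE)
  have IH: "xor_diff_diag k (j + 1) \<le> 3 * xor_diff_diag k j"
    "xor_diff_diag k j \<le> 3 * xor_diff_diag k (j + 1)" using Suc.IH[of j] by auto
  from j show ?case
  proof
    assume h: "h = 2 * j"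
    show ?thesis using IH unfolding h even odd by simp
  next
    assume h: "h = 2 * j + 1"
    show ?thesis using IH xor_diff_diag_Suc_even[of k "j + 1"] unfolding h odd by simp
  qed
qed

lemma xor_diff_diag_odd_le:
  assumes "k \<ge> 1"
  shows "xor_diff_diag k (2 * h + 1) \<le> xor_diff_diag k (2 * h)"
    and "xor_diff_diag k (2 * h + 1) \<le> xor_diff_diag k (2 * h + 2)"
proof -
  have "2 * h + 2 = 2 * (h + 1)" by simp
  moreover have "xor_diff_diag k (2 * h + 1) \<le> xor_diff_diag k (2 * h) \<and>
      xor_diff_diag k (2 * h + 1) \<le> xor_diff_diag k (2 * (h + 1))"
  proof (cases "k = 1")
    case True
    then show ?thesis by (simp add: xor_diff_diag_1[unfolded One_nat_def])
  next
    case False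
    then obtain j where j: "k = Suc j" "j \<ge> 1" using assms by (cases k) auto
    have "xor_diff_diag j (h + 1) \<le> 3 * xor_diff_diag j h"
      "xor_diff_diag j h \<le> 3 * xor_diff_diag j (h + 1)" using xor_diff_diag_ratio[OF j(2), of h] by auto
    then show ?thesis
      unfolding j(1) xor_diff_diag_Suc_even xor_diff_diag_Suc_odd[OF j(2)] by simp
  qed
  ultimately show "xor_diff_diag k (2 * h + 1) \<le> xor_diff_diag k (2 * h)"
    and "xor_diff_diag k (2 * h + 1) \<le> xor_diff_diag k (2 * h + 2)"
    by simp_all
qed

lemma xor_diff_count_pair_le:
  assumes "k \<ge> 1"
  shows "xor_diff_count k p q d + xor_diff_count k (p + 1) q d \<le>
    max (xor_diff_diag k p) (xor_diff_diag k (p + 1))"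
proof (cases "odd (d - int p - int q)")
  case True
  then show ?thesis
    using xor_diff_count_eq_0[OF assms True] xor_diff_count_le_diag[OF assms, of "p + 1"]
    by (simp add: le_max_iff_disj)
next
  case False
  then have "odd (d - int (p + 1) - int q)" by presburger
  then show ?thesis
    using xor_diff_count_eq_0[OF assms] xor_diff_count_le_diag[OF assms, of p]
    by (simp add: le_max_iff_disj)
qed

section \<open>Rotation by n - 1\<close>

lemma rotl_Suc_self: "rotl (Suc m) m v = (v mod 2) * 2 ^ m + v div 2"
proof -
  have "(v * 2 ^ m) mod 2 ^ Suc m = (v mod 2) * 2 ^ m"
    using mod_mult_mult2[of v "2 ^ m" 2] by (simp add: mult.commute)
  then show ?thesis unfolding rotl_def by simp
qed

text \<open>The difference of the high halves forced by an output difference \<open>c < 2 M\<close>, depending on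
  whether the rotated-in top bits of the two XOR values differ.\<close>
definition rot_offset :: "nat \<Rightarrow> nat \<Rightarrow> bool \<Rightarrow> int" where
  "rot_offset M c flip = (if flip then int c - int M else if c < M then int c else int c - 2 * int M)"

lemma top_bit_add_mod_iff:
  fixes M V U c v0 u0 :: nat
  assumes "V < M" "U < M" "c < 2 * M" "v0 < 2" "u0 < 2"
  shows "v0 * M + V = (u0 * M + U + c) mod (2 * M) \<longleftrightarrow>
    int V - int U = rot_offset M c (v0 \<noteq> u0)"
proof -
  let ?t = "u0 * M + U + c"
  have "u0 * M \<le> M" using assms by (auto simp: less_2_cases_iff)
  then have "?t < 4 * M" using assms by linarith
  then have "?t mod (2 * M) = (if ?t < 2 * M then ?t else ?t - 2 * M)"
    by (simp add: mod_if le_mod_geq)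
  then show ?thesis
    using assms unfolding rot_offset_def less_2_cases_iff by (auto split: if_splits)
qed

lemma XR_shift_iff:
  fixes x y a b c m :: nat
  assumes "x < 2 ^ Suc m" "y < 2 ^ Suc m" "c < 2 ^ Suc m"
  shows "XR (Suc m) m (addm (Suc m) x a) (addm (Suc m) y b) = addm (Suc m) (XR (Suc m) m x y) c \<longleftrightarrow>
    xor_diff m ((x mod 2 + a) div 2) ((y mod 2 + b) div 2) (x div 2) (y div 2) =
      rot_offset (2 ^ m) c (odd (a + b))"
proof -
  define V where
    "V = xor ((x div 2 + (x mod 2 + a) div 2) mod 2 ^ m) ((y div 2 + (y mod 2 + b) div 2) mod 2 ^ m)"
  define U where "U = xor (x div 2) (y div 2)"
  have "V < 2 ^ m" unfolding V_def by (simp add: xor_less_pow2)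
  moreover have "U < 2 ^ m"
    using assms unfolding U_def by (simp add: xor_less_pow2 less_mult_imp_div_less)
  moreover have "c < 2 * 2 ^ m" using assms by simp
  moreover have "((x + a + y + b) mod 2 \<noteq> (x + y) mod 2) = odd (a + b)" by presburger
  ultimately have "(x + a + y + b) mod 2 * 2 ^ m + V =
      ((x + y) mod 2 * 2 ^ m + U + c) mod (2 * 2 ^ m) \<longleftrightarrow> int V - int U = rot_offset (2 ^ m) c (odd (a + b))"
    using top_bit_add_mod_iff by simp
  then show ?thesis
    unfolding XR_def addm_def rotl_Suc_self xor_add_mod_pow2_Suc xor_halves[of x y] xor_diff_def
      V_def[symmetric] U_def[symmetric]
    by simp
qed

definition XR_count :: "nat \<Rightarrow> nat \<Rightarrow> nat \<Rightarrow> nat \<Rightarrow> nat" where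
  "XR_count m a b c = card {(x, y). x \<in> words (Suc m) \<and> y \<in> words (Suc m) \<and>
     XR (Suc m) m (addm (Suc m) x a) (addm (Suc m) y b) = addm (Suc m) (XR (Suc m) m x y) c}"

lemma card_pairs_eq_sum:
  fixes K :: nat
  shows "card {(x, y). x \<in> {0..<K} \<and> y \<in> {0..<K} \<and> P x y} = (\<Sum>x<K. \<Sum>y<K. of_bool (P x y))"
proof -
  have "{(x, y). x \<in> {0..<K} \<and> y \<in> {0..<K} \<and> P x y} =
      Sigma {..<K} (\<lambda>x. {..<K} \<inter> {y. P x y})"
    by auto
  then show ?thesis by (simp add: card_SigmaI)
qed

lemma XR_count_eq:
  assumes "c < 2 ^ Suc m"
  shows "XR_count m a b c = (\<Sum>x0<2. \<Sum>y0<2.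
    xor_diff_count m ((x0 + a) div 2) ((y0 + b) div 2) (rot_offset (2 ^ m) c (odd (a + b))))"
proof -
  let ?D = "rot_offset (2 ^ m) c (odd (a + b))"
  have "XR_count m a b c = (\<Sum>x<2 ^ Suc m. \<Sum>y<2 ^ Suc m.
      of_bool (xor_diff m ((x mod 2 + a) div 2) ((y mod 2 + b) div 2) (x div 2) (y div 2) = ?D))"
    unfolding XR_count_def words_def card_pairs_eq_sum using assms
    by (intro sum.cong refl) (simp add: XR_shift_iff)
  also have "\<dots> = (\<Sum>x0<2. \<Sum>x<2 ^ m. \<Sum>y0<2. \<Sum>y<2 ^ m.
      of_bool (xor_diff m ((x0 + a) div 2) ((y0 + b) div 2) x y = ?D))"
    unfolding sum_lessThan_pow2_Suc by (intro sum.cong refl) (simp add: less_2_cases_iff)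
  also have "\<dots> = (\<Sum>x0<2. \<Sum>y0<2. xor_diff_count m ((x0 + a) div 2) ((y0 + b) div 2) ?D)"
    unfolding xor_diff_count_def xor_diff_row_def by (rule sum.cong[OF refl]) (rule sum.swap)
  finally show ?thesis .
qed

lemma Max_pairs_eqI:
  fixes f :: "'a \<Rightarrow> 'b \<Rightarrow> 'c::linorder"
  assumes "finite A" "finite B" "b \<in> A" "c \<in> B"
    and "\<And>\<beta> \<gamma>. \<beta> \<in> A \<Longrightarrow> \<gamma> \<in> B \<Longrightarrow> f \<beta> \<gamma> \<le> f b c"
  shows "Max {f \<beta> \<gamma> | \<beta> \<gamma>. \<beta> \<in> A \<and> \<gamma> \<in> B} = f b c"
proof (rule Max_eqI)
  have "{f \<beta> \<gamma> | \<beta> \<gamma>. \<beta> \<in> A \<and> \<gamma> \<in> B} = case_prod f ` (A \<times> B)" by auto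
  then show "finite {f \<beta> \<gamma> | \<beta> \<gamma>. \<beta> \<in> A \<and> \<gamma> \<in> B}" using assms by simp
qed (use assms in auto)

lemma Max_adpXR_eqI:
  assumes "b \<in> words (Suc m)" "c \<in> words (Suc m)"
    and "\<And>\<beta> \<gamma>. \<beta> \<in> words (Suc m) \<Longrightarrow> \<gamma> \<in> words (Suc m) \<Longrightarrow>
      XR_count m a \<beta> \<gamma> \<le> XR_count m a b c"
  shows "Max {adpXR (Suc m) m a \<beta> \<gamma> | \<beta> \<gamma>. \<beta> \<in> words (Suc m) \<and> \<gamma> \<in> words (Suc m)} =
    adpXR (Suc m) m a b c"
proof (rule Max_pairs_eqI)
  fix \<beta> \<gamma> assume "\<beta> \<in> words (Suc m)" "\<gamma> \<in> words (Suc m)"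
  then show "adpXR (Suc m) m a \<beta> \<gamma> \<le> adpXR (Suc m) m a b c"
    using assms(3) unfolding adpXR_def adp2_def XR_count_def[symmetric]
    by (simp add: divide_right_mono)
qed (use assms in \<open>simp_all add: words_def\<close>)

lemma XR_count_even_le:
  assumes "m \<ge> 1" "c < 2 ^ Suc m"
  shows "XR_count m (2 * h) b c \<le> 4 * xor_diff_diag m h"
proof -
  have carry: "(x0 + 2 * h) div 2 = h" if "x0 < 2" for x0 :: nat using that by simp
  have "XR_count m (2 * h) b c \<le> (\<Sum>x0<2::nat. \<Sum>y0<2::nat. xor_diff_diag m h)"
    unfolding XR_count_eq[OF assms(2)]
    by (intro sum_mono) (simp add: carry xor_diff_count_le_diag[OF assms(1)])
  then show ?thesis by simp
qed

lemma XR_count_odd_le: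
  assumes "m \<ge> 1" "c < 2 ^ Suc m"
  shows "XR_count m (2 * h + 1) b c \<le> 2 * max (xor_diff_diag m h) (xor_diff_diag m (h + 1))"
proof -
  have "XR_count m (2 * h + 1) b c = (\<Sum>y0<2. \<Sum>x0<2. xor_diff_count m
      ((x0 + (2 * h + 1)) div 2) ((y0 + b) div 2) (rot_offset (2 ^ m) c (odd (2 * h + 1 + b))))"
    unfolding XR_count_eq[OF assms(2)] by (rule sum.swap)
  also have "\<dots> \<le> (\<Sum>y0<2::nat. max (xor_diff_diag m h) (xor_diff_diag m (h + 1)))"
    using xor_diff_count_pair_le[OF assms(1), of h] by (intro sum_mono) (simp add: sum_lessThan_2)
  finally show ?thesis by simp
qed

lemma XR_count_even_diag: "XR_count m (2 * h) (2 * h) 0 = 4 * xor_diff_diag m h"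
  by (simp add: XR_count_eq sum_lessThan_2 rot_offset_def)

lemma XR_count_01:
  assumes "m \<ge> 1"
  shows "XR_count m (4 * h + 1) (4 * h) (2 ^ m) = 2 * xor_diff_diag m (2 * h)"
proof -
  have "xor_diff_count m (2 * h + 1) (2 * h) 0 = 0"
    using assms by (intro xor_diff_count_eq_0) simp_all
  then show ?thesis by (simp add: XR_count_eq sum_lessThan_2 rot_offset_def)
qed

lemma XR_count_11:
  assumes "m \<ge> 1" "2 * h + 2 \<le> 2 ^ m"
  shows "XR_count m (4 * h + 3) (2 * (2 ^ m - (2 * h + 2))) (2 ^ m) =
    2 * xor_diff_diag m (2 * h + 2)"
proof -
  let ?q = "2 ^ m - (2 * h + 2)"
  have "even ?q" using assms by simp
  then have "xor_diff_count m (2 * h + 1) ?q 0 = 0"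
    using assms by (intro xor_diff_count_eq_0) simp_all
  moreover have "xor_diff_count m (2 * h + 2) ?q 0 = xor_diff_diag m (2 * h + 2)"
    using xor_diff_count_reflect[OF assms(2), of "2 * h + 2" 0] by simp
  moreover have "(4 * h + 3) div 2 = 2 * h + 1" "(1 + (4 * h + 3)) div 2 = 2 * h + 2" by simp_all
  ultimately show ?thesis
    by (simp add: XR_count_eq sum_lessThan_2 rot_offset_def)
qed

lemma Max_adpXR_even:
  assumes "m \<ge> 1" "\<alpha> \<in> words m"
  shows "Max {adpXR (Suc m) m (2 * \<alpha>) \<beta> \<gamma> | \<beta> \<gamma>. \<beta> \<in> words (Suc m) \<and> \<gamma> \<in> words (Suc m)} =
    adpXR (Suc m) m (2 * \<alpha>) (2 * \<alpha>) 0"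
  using assms XR_count_even_le[OF assms(1)]
  by (intro Max_adpXR_eqI) (simp_all add: words_def XR_count_even_diag)

lemma Max_adpXR_01:
  assumes "m \<ge> 1" "\<alpha> \<in> words (m - 1)"
  shows "Max {adpXR (Suc m) m (4 * \<alpha> + 1) \<beta> \<gamma> | \<beta> \<gamma>. \<beta> \<in> words (Suc m) \<and> \<gamma> \<in> words (Suc m)} =
    adpXR (Suc m) m (4 * \<alpha> + 1) (4 * \<alpha>) (2 ^ m)"
proof (rule Max_adpXR_eqI)
  have "(2::nat) ^ Suc m = 4 * 2 ^ (m - 1)" using assms(1) by (cases m) simp_all
  then show "4 * \<alpha> \<in> words (Suc m)" "2 ^ m \<in> words (Suc m)"
    using assms(2) by (simp_all add: words_def)
next
  fix \<beta> \<gamma> assume "\<gamma> \<in> words (Suc m)"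
  then have "XR_count m (4 * \<alpha> + 1) \<beta> \<gamma> \<le>
      2 * max (xor_diff_diag m (2 * \<alpha>)) (xor_diff_diag m (2 * \<alpha> + 1))"
    using XR_count_odd_le[OF assms(1), of \<gamma> "2 * \<alpha>" \<beta>] by (simp add: words_def)
  also have "\<dots> = 2 * xor_diff_diag m (2 * \<alpha>)"
    using xor_diff_diag_odd_le(1)[OF assms(1), of \<alpha>] by (simp add: max_absorb1)
  also have "\<dots> = XR_count m (4 * \<alpha> + 1) (4 * \<alpha>) (2 ^ m)"
    by (rule XR_count_01[OF assms(1), symmetric])
  finally show "XR_count m (4 * \<alpha> + 1) \<beta> \<gamma> \<le> XR_count m (4 * \<alpha> + 1) (4 * \<alpha>) (2 ^ m)" .
qed

lemma Max_adpXR_11: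
  assumes "m \<ge> 1" "\<alpha> \<in> words (m - 1)"
  shows "Max {adpXR (Suc m) m (4 * \<alpha> + 3) \<beta> \<gamma> | \<beta> \<gamma>. \<beta> \<in> words (Suc m) \<and> \<gamma> \<in> words (Suc m)} =
    adpXR (Suc m) m (4 * \<alpha> + 3) (4 * (2 ^ (m - 1) - 1 - \<alpha>)) (2 ^ m)"
proof -
  have "(2::nat) ^ m = 2 * 2 ^ (m - 1)" using assms(1) by (cases m) simp_all
  then have le: "2 * \<alpha> + 2 \<le> 2 ^ m"
    and b: "4 * (2 ^ (m - 1) - 1 - \<alpha>) = 2 * (2 ^ m - (2 * \<alpha> + 2))"
    using assms(2) by (simp_all add: words_def)
  show ?thesis unfolding b
  proof (rule Max_adpXR_eqI)
    show "2 * (2 ^ m - (2 * \<alpha> + 2)) \<in> words (Suc m)" "2 ^ m \<in> words (Suc m)"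
      by (simp_all add: words_def)
  next
    fix \<beta> \<gamma> assume "\<gamma> \<in> words (Suc m)"
    then have "XR_count m (4 * \<alpha> + 3) \<beta> \<gamma> \<le>
        2 * max (xor_diff_diag m (2 * \<alpha> + 1)) (xor_diff_diag m (2 * \<alpha> + 2))"
      using XR_count_odd_le[OF assms(1), of \<gamma> "2 * \<alpha> + 1" \<beta>] by (simp add: words_def numeral_3_eq_3)
    also have "\<dots> = 2 * xor_diff_diag m (2 * \<alpha> + 2)"
      using xor_diff_diag_odd_le(2)[OF assms(1), of \<alpha>] by (simp add: max_absorb2)
    also have "\<dots> = XR_count m (4 * \<alpha> + 3) (2 * (2 ^ m - (2 * \<alpha> + 2))) (2 ^ m)"
      by (rule XR_count_11[OF assms(1) le, symmetric])
    finally show "XR_count m (4 * \<alpha> + 3) \<beta> \<gamma> \<le>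
        XR_count m (4 * \<alpha> + 3) (2 * (2 ^ m - (2 * \<alpha> + 2))) (2 ^ m)" .
  qed
qed

theorem theorem7:
  fixes n :: nat
  assumes "n \<ge> 2"
  shows "(\<forall>\<alpha> \<in> words (n - 1).
            Max {adpXR n (n - 1) (2 * \<alpha>) \<beta> \<gamma> | \<beta> \<gamma>. \<beta> \<in> words n \<and> \<gamma> \<in> words n}
            = adpXR n (n - 1) (2 * \<alpha>) (2 * \<alpha>) 0)
       \<and> (\<forall>\<alpha> \<in> words (n - 2).
            Max {adpXR n (n - 1) (4 * \<alpha> + 1) \<beta> \<gamma> | \<beta> \<gamma>. \<beta> \<in> words n \<and> \<gamma> \<in> words n}
            = adpXR n (n - 1) (4 * \<alpha> + 1) (4 * \<alpha>) (2 ^ (n - 1)))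
       \<and> (\<forall>\<alpha> \<in> words (n - 2).
            Max {adpXR n (n - 1) (4 * \<alpha> + 3) \<beta> \<gamma> | \<beta> \<gamma>. \<beta> \<in> words n \<and> \<gamma> \<in> words n}
            = adpXR n (n - 1) (4 * \<alpha> + 3) (4 * (2 ^ (n - 2) - 1 - \<alpha>)) (2 ^ (n - 1)))"
proof -
  obtain m where n: "n = Suc m" and m: "m \<ge> 1" using assms by (cases n) auto
  then show ?thesis using Max_adpXR_even[OF m] Max_adpXR_01[OF m] Max_adpXR_11[OF m] by simp
qed

end
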